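(* Let $H$ be a real Hilbert space, $A:H\to H$ bounded linear, $f\in H$ such that $Au=f$ is solvable, and $y$ the minimal-norm solution ($Ay=f$, $y\perp\mathcal N(A)$). Let $P:H\to H$ be bounded linear with $T:=PA$ selfadjoint, $T\ge0$, and $\mathcal N(T)=\mathcal N(A)$. Let $u_0\in H$ with $u_0-y\perp\mathcal N(A)$. For each $\delta>0$ let $f_\delta\in H$ satisfy $\|f_\delta-f\|\le\delta$, and let $u_\delta(t)$ be the solution of $$\dot u_\delta(t)=-P(Au_\delta(t)-f_\delta),\qquad u_\delta(0)=u_0.$$ If $t_\delta>0$ satisfy $\lim_{\delta\to0}t_\delta=\infty$ and $\lim_{\delta\to0}t_\delta\delta=0$, then $\lim_{\delta\to0}\|u_\delta(t_\delta)-y\|=0$. In particular this holds for $t_\delta=C\delta^{-\gamma}$ with constants $C>0$, $\gamma\in(0,1)$.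
   Context: $\mathcal N(A)=\{u\in H:Au=0\}$. *)

theory Defs
  imports "HOL-Analysis.Analysis"
begin

definition null_space :: "('a::real_vector \<Rightarrow> 'b::real_vector) \<Rightarrow> 'a set" where
  "null_space A = {u. A u = 0}"

definition orth_to :: "'a::real_inner \<Rightarrow> 'a set \<Rightarrow> bool" where
  "orth_to x S \<longleftrightarrow> (\<forall>z\<in>S. x \<bullet> z = 0)"

end

theory Submission
  imports Defs "HOL-Real_Asymp.Real_Asymp"
begin

(* Put T = P A and e_delta(t) = u_delta(t) - y.  Since A y = f, the error solves
   e' = -T e + g_delta with g_delta = P (f_delta - f), |g_delta| <= |P| delta, and its
   initial value u0 - y is orthogonal to N(A) = N(T).  The proof avoids the spectral theorem:

   1. Growth: for monotone T, two flows with forcings g1, g2 and equal initial values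
      stay within |g1 - g2| t of each other (perturbed_flow_growth).
   2. Decay: a solution of v' = -T v with T selfadjoint, nonnegative and v(0) orthogonal
      to N(T) tends to 0 (locale nonneg_selfadjoint_flow): the energy |v|^2 decreases,
      |T v(t)|^2 = O(1/t), and the identity v(c+a) . v(c-a) = |v(c)|^2 makes v(n) Cauchy
      with a limit that lies in N(T) and is orthogonal to N(T).
   3. Existence: with no ODE existence theory at hand, the homogeneous solution v is
      obtained as the limit of the given perturbed solutions for delta = 1/(n+1), using
      step 1 and the convergence of derivatives (homogeneous_flow_as_limit).
   4. Hence |e_delta(t_delta)| <= |v(t_delta)| + |P| delta t_delta -> 0
      (stopping_rule_convergence); the theorem instantiates this with T = P A. *)

lemma antitone_from_nonpos_derivative:
  fixes f f' :: "real \<Rightarrow> real"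
  assumes deriv: "\<And>t. t \<ge> a \<Longrightarrow> (f has_real_derivative f' t) (at t within {a..})"
    and nonpos: "\<And>t. t > a \<Longrightarrow> f' t \<le> 0"
    and "a \<le> s" "s \<le> t"
  shows "f t \<le> f s"
proof (rule DERIV_nonpos_imp_decreasing_open[OF \<open>s \<le> t\<close>])
  fix x assume x: "s < x" "x < t"
  have "at x within {a..} = at x"
    using x \<open>a \<le> s\<close> by (intro at_within_interior) simp
  then show "\<exists>y. (f has_real_derivative y) (at x) \<and> y \<le> 0"
    using deriv[of x] nonpos[of x] x \<open>a \<le> s\<close> by auto
next
  have "continuous_on {a..} f"
    using deriv by (auto intro!: continuous_on_eq_continuous_within[THEN iffD2] DERIV_continuous)
  then show "continuous_on {s..t} f"
    by (rule continuous_on_subset) (use \<open>a \<le> s\<close> in auto)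
qed

lemma has_real_derivative_inner:
  fixes f g :: "real \<Rightarrow> 'a::real_inner"
  assumes "(f has_vector_derivative f') (at t within S)" "(g has_vector_derivative g') (at t within S)"
  shows "((\<lambda>s. f s \<bullet> g s) has_real_derivative f t \<bullet> g' + f' \<bullet> g t) (at t within S)"
  using bounded_bilinear.has_vector_derivative[OF bounded_bilinear_inner assms]
  by (simp add: has_real_derivative_iff_has_vector_derivative)

lemma has_real_derivative_inner_self:
  fixes f :: "real \<Rightarrow> 'a::real_inner"
  assumes "(f has_vector_derivative f') (at t within S)"
  shows "((\<lambda>s. f s \<bullet> f s) has_real_derivative 2 * (f t \<bullet> f')) (at t within S)"
  using has_real_derivative_inner[OF assms assms] by (simp add: inner_commute)

(* Since |e| need not be
   differentiable at its zeros, the proof uses the smoothed norm sqrt(|e|^2 + eps^2). *)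
lemma perturbed_flow_growth:
  fixes T :: "'a::real_inner \<Rightarrow> 'a" and e :: "real \<Rightarrow> 'a"
  assumes nonneg: "\<And>x. 0 \<le> T x \<bullet> x"
    and flow: "\<And>t. t \<ge> 0 \<Longrightarrow> (e has_vector_derivative - T (e t) + g) (at t within {0..})"
    and start: "e 0 = 0" and "t \<ge> 0"
  shows "norm (e t) \<le> norm g * t"
proof (rule field_le_epsilon)
  fix \<epsilon> :: real assume "\<epsilon> > 0"
  define \<psi> where "\<psi> s = sqrt (e s \<bullet> e s + \<epsilon>\<^sup>2)" for s
  have norm_le_\<psi>: "norm (e s) \<le> \<psi> s" for s
    unfolding \<psi>_def norm_eq_sqrt_inner by (rule real_sqrt_le_mono) simp
  have radicand_pos: "0 < e s \<bullet> e s + \<epsilon>\<^sup>2" for s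
    using \<open>\<epsilon> > 0\<close> by (simp add: add_nonneg_pos)
  define slope where "slope s = inverse (\<psi> s) / 2 * (2 * (e s \<bullet> (- T (e s) + g))) - norm g" for s
  have deriv: "((\<lambda>s. \<psi> s - norm g * s) has_real_derivative slope s) (at s within {0..})"
    if "s \<ge> 0" for s
  proof -
    have radicand: "((\<lambda>s. e s \<bullet> e s + \<epsilon>\<^sup>2) has_real_derivative 2 * (e s \<bullet> (- T (e s) + g))) (at s within {0..})"
      using has_real_derivative_inner_self[OF flow[OF that]] by (auto intro!: derivative_eq_intros)
    have "(\<psi> has_real_derivative inverse (\<psi> s) / 2 * (2 * (e s \<bullet> (- T (e s) + g)))) (at s within {0..})"
      unfolding \<psi>_def by (rule DERIV_chain2[OF DERIV_real_sqrt[OF radicand_pos[of s]] radicand])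
    then show ?thesis
      unfolding slope_def by (auto intro!: derivative_eq_intros)
  qed
  have "slope s \<le> 0" for s
  proof -
    have "e s \<bullet> (- T (e s) + g) = e s \<bullet> g - T (e s) \<bullet> e s"
      by (simp add: inner_diff_right inner_commute)
    also have "\<dots> \<le> norm (e s) * norm g"
      using nonneg[of "e s"] norm_cauchy_schwarz[of "e s" g] by linarith
    also have "\<dots> \<le> \<psi> s * norm g"
      by (rule mult_right_mono[OF norm_le_\<psi>]) simp
    finally have "e s \<bullet> (- T (e s) + g) \<le> \<psi> s * norm g" .
    moreover have "\<psi> s > 0"
      using radicand_pos[of s] by (simp add: \<psi>_def)
    ultimately show ?thesis
      by (simp add: slope_def field_simps)
  qed
  then have "\<psi> t - norm g * t \<le> \<psi> 0 - norm g * 0"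
    using \<open>t \<ge> 0\<close> by (intro antitone_from_nonpos_derivative[OF deriv]) auto
  then have "\<psi> t \<le> norm g * t + \<epsilon>"
    using \<open>\<epsilon> > 0\<close> by (simp add: \<psi>_def start)
  then show "norm (e t) \<le> norm g * t + \<epsilon>"
    using norm_le_\<psi>[of t] by linarith
qed

locale nonneg_selfadjoint_flow =
  fixes T :: "'a::{real_inner, complete_space} \<Rightarrow> 'a" and v :: "real \<Rightarrow> 'a"
  assumes linear: "bounded_linear T"
    and selfadjoint: "\<And>x z. T x \<bullet> z = x \<bullet> T z"
    and nonneg: "\<And>x. 0 \<le> T x \<bullet> x"
    and flow: "\<And>t. t \<ge> 0 \<Longrightarrow> (v has_vector_derivative - T (v t)) (at t within {0..})"
begin

interpretation T: bounded_linear T by (rule linear)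

(* The energy |v(t)|^2 is nonincreasing, since its derivative is -2 (T v . v). *)
lemma energy_antitone:
  assumes "0 \<le> s" "s \<le> t"
  shows "norm (v t) \<le> norm (v s)"
proof -
  have "v t \<bullet> v t \<le> v s \<bullet> v s"
  proof (rule antitone_from_nonpos_derivative[OF _ _ assms])
    fix r :: real assume "r \<ge> 0"
    show "((\<lambda>r. v r \<bullet> v r) has_real_derivative - 2 * (T (v r) \<bullet> v r)) (at r within {0..})"
      using has_real_derivative_inner_self[OF flow[OF \<open>r \<ge> 0\<close>]] by (simp add: inner_commute)
  qed (use nonneg in simp)
  then show ?thesis by (simp add: norm_le)
qed

lemma kernel_component_constant:
  assumes "T k = 0" "t \<ge> 0"
  shows "v t \<bullet> k = v 0 \<bullet> k"
proof -
  have "\<exists>c. \<forall>r\<in>{0..}. v r \<bullet> k = c"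
  proof (rule has_field_derivative_zero_constant)
    fix r :: real assume "r \<in> {0..}"
    have "((\<lambda>r. v r \<bullet> k) has_real_derivative v r \<bullet> 0 + (- T (v r)) \<bullet> k) (at r within {0..})"
      using \<open>r \<in> {0..}\<close> by (intro has_real_derivative_inner flow) auto
    moreover have "T (v r) \<bullet> k = 0"
      using selfadjoint[of "v r" k] \<open>T k = 0\<close> by simp
    ultimately show "((\<lambda>r. v r \<bullet> k) has_real_derivative 0) (at r within {0..})"
      by simp
  qed (simp add: convex_real_interval)
  then show ?thesis using \<open>t \<ge> 0\<close> by force
qed

(* Selfadjointness makes v(c + a) . v(c - a) independent of a; this replaces the
   spectral theorem in the proof that v(t) converges. *)
lemma symmetric_product:
  assumes "0 \<le> a" "a \<le> c"
  shows "v (c + a) \<bullet> v (c - a) = v c \<bullet> v c"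
proof -
  have "\<exists>k. \<forall>b\<in>{0..c}. v (c + b) \<bullet> v (c - b) = k"
  proof (rule has_field_derivative_zero_constant)
    fix b assume b: "b \<in> {0..c}"
    have forward: "((\<lambda>b. v (c + b)) has_vector_derivative - T (v (c + b))) (at b within {0..c})"
    proof -
      have "(v has_vector_derivative - T (v (c + b))) (at (c + b) within (\<lambda>b. c + b) ` {0..c})"
        by (rule has_vector_derivative_within_subset[OF flow]) (use b in auto)
      then show ?thesis
        using vector_diff_chain_within[of "\<lambda>b. c + b" 1 b "{0..c}"]
        by (fastforce simp: o_def intro!: derivative_eq_intros)
    qed
    have backward: "((\<lambda>b. v (c - b)) has_vector_derivative T (v (c - b))) (at b within {0..c})"
    proof -
      have "(v has_vector_derivative - T (v (c - b))) (at (c - b) within (\<lambda>b. c - b) ` {0..c})"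
        by (rule has_vector_derivative_within_subset[OF flow]) (use b in auto)
      then show ?thesis
        using vector_diff_chain_within[of "\<lambda>b. c - b" "-1" b "{0..c}"]
        by (fastforce simp: o_def intro!: derivative_eq_intros)
    qed
    show "((\<lambda>b. v (c + b) \<bullet> v (c - b)) has_real_derivative 0) (at b within {0..c})"
      using has_real_derivative_inner[OF forward backward] selfadjoint[of "v (c + b)" "v (c - b)"]
      by simp
  qed simp
  then show ?thesis using assms by force
qed

lemma increment_bound:
  assumes "0 \<le> s" "s \<le> t"
  shows "(norm (v t - v s))\<^sup>2 \<le> (norm (v s))\<^sup>2 - (norm (v t))\<^sup>2"
proof -
  define c where "c = (s + t) / 2"
  have "v t \<bullet> v s = v c \<bullet> v c"
    using symmetric_product[of "(t - s) / 2" c] assms by (simp add: c_def field_simps)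
  moreover have "norm (v t) \<le> norm (v c)"
    using assms by (intro energy_antitone) (auto simp: c_def)
  ultimately have "(norm (v t))\<^sup>2 \<le> v t \<bullet> v s"
    by (simp add: power2_norm_eq_inner norm_le)
  then show ?thesis
    using dot_norm_neg[of "v t" "v s"] by (simp add: field_simps)
qed

(* The residual decays like 1/t: the Lyapunov function t |T v|^2 + (T v . v)/2
   has derivative -2 t (T (T v) . T v) <= 0. *)
lemma residual_decay:
  assumes "t > 0"
  shows "(norm (T (v t)))\<^sup>2 \<le> (T (v 0) \<bullet> v 0) / 2 * inverse t"
proof -
  define G where "G r = r * (T (v r) \<bullet> T (v r)) + (T (v r) \<bullet> v r) / 2" for r
  have deriv: "(G has_real_derivative - 2 * r * (T (T (v r)) \<bullet> T (v r))) (at r within {0..})"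
    if "r \<ge> 0" for r
  proof -
    have Tflow: "((\<lambda>r. T (v r)) has_vector_derivative - T (T (v r))) (at r within {0..})"
      using T.has_vector_derivative[OF flow[OF that]] by (simp add: T.neg)
    have "(G has_real_derivative 1 * (T (v r) \<bullet> T (v r)) + 2 * (T (v r) \<bullet> - T (T (v r))) * r
        + (T (v r) \<bullet> - T (v r) + - T (T (v r)) \<bullet> v r) / 2) (at r within {0..})"
      unfolding G_def
      by (intro DERIV_add DERIV_mult DERIV_ident DERIV_cdivide has_real_derivative_inner_self
          has_real_derivative_inner Tflow flow that)
    moreover have "T (T (v r)) \<bullet> v r = T (v r) \<bullet> T (v r)"
      by (rule selfadjoint)
    ultimately show ?thesis
      by (simp add: algebra_simps inner_commute)
  qed
  have "G t \<le> G 0"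
    using assms nonneg by (intro antitone_from_nonpos_derivative[OF deriv]) auto
  then have "t * (norm (T (v t)))\<^sup>2 \<le> (T (v 0) \<bullet> v 0) / 2"
    using nonneg[of "v t"] by (simp add: G_def power2_norm_eq_inner)
  then show ?thesis
    using assms by (simp add: field_simps)
qed

lemma residual_tendsto_zero: "((\<lambda>t. T (v t)) \<longlongrightarrow> 0) at_top"
proof -
  have bound: "((\<lambda>t. (T (v 0) \<bullet> v 0) / 2 * inverse t) \<longlongrightarrow> 0) at_top"
    by (intro tendsto_mult_right_zero tendsto_inverse_0_at_top filterlim_ident)
  have "((\<lambda>t. (norm (T (v t)))\<^sup>2) \<longlongrightarrow> 0) at_top"
  proof (rule tendsto_sandwich[OF _ _ tendsto_const bound])
    show "\<forall>\<^sub>F t in at_top. (norm (T (v t)))\<^sup>2 \<le> (T (v 0) \<bullet> v 0) / 2 * inverse t"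
      using eventually_gt_at_top[of 0] by eventually_elim (rule residual_decay)
  qed simp
  then have "((\<lambda>t. sqrt ((norm (T (v t)))\<^sup>2)) \<longlongrightarrow> 0) at_top"
    using tendsto_real_sqrt by fastforce
  then show ?thesis
    by (simp add: tendsto_norm_zero_iff)
qed

(* The samples v(n) form a Cauchy sequence, because the energies converge. *)
lemma samples_convergent: "convergent (\<lambda>n. v (real n))"
proof -
  define E where "E n = (norm (v (real n)))\<^sup>2" for n
  have "decseq E"
    unfolding decseq_def E_def by (auto intro: power_mono energy_antitone)
  then obtain L where "E \<longlonglongrightarrow> L"
    using decseq_convergent[of E 0] by (auto simp: E_def)
  then have "Cauchy E"
    by (rule LIMSEQ_imp_Cauchy)
  have increments: "(norm (v (real m) - v (real n)))\<^sup>2 \<le> \<bar>E m - E n\<bar>" for m n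
    using increment_bound[of "real m" "real n"] increment_bound[of "real n" "real m"]
    by (cases "m \<le> n") (auto simp: E_def norm_minus_commute)
  have "Cauchy (\<lambda>n. v (real n))"
  proof (rule CauchyI)
    fix e :: real assume "e > 0"
    then obtain M where M: "\<And>m n. m \<ge> M \<Longrightarrow> n \<ge> M \<Longrightarrow> norm (E m - E n) < e\<^sup>2"
      using CauchyD[OF \<open>Cauchy E\<close>, of "e\<^sup>2"] by auto
    have "norm (v (real m) - v (real n)) < e" if "m \<ge> M" "n \<ge> M" for m n
    proof (rule power_less_imp_less_base)
      show "(norm (v (real m) - v (real n)))\<^sup>2 < e\<^sup>2"
        using increments[of m n] M[OF that] by simp
    qed (use \<open>e > 0\<close> in simp)
    then show "\<exists>M. \<forall>m\<ge>M. \<forall>n\<ge>M. norm (v (real m) - v (real n)) < e"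
      by blast
  qed
  then show ?thesis
    by (rule Cauchy_convergent)
qed

(* Decay of the homogeneous flow when v(0) is orthogonal to the kernel of T:
   the limit w of v(n) satisfies T w = 0 and w . w = lim v(n) . w = v(0) . w = 0;
   monotonicity of the energy then gives convergence along all t -> oo. *)
theorem tendsto_zero:
  assumes orthogonal: "\<And>k. T k = 0 \<Longrightarrow> v 0 \<bullet> k = 0"
  shows "(v \<longlongrightarrow> 0) at_top"
proof -
  obtain w where samples: "(\<lambda>n. v (real n)) \<longlonglongrightarrow> w"
    using samples_convergent unfolding convergent_def by blast
  have "(\<lambda>n. T (v (real n))) \<longlonglongrightarrow> 0"
    using filterlim_compose[OF residual_tendsto_zero filterlim_real_sequentially] by simp
  then have "T w = 0"
    using T.tendsto[OF samples] LIMSEQ_unique by blast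
  then have "v (real n) \<bullet> w = 0" for n
    using kernel_component_constant[of w "real n"] orthogonal[of w] by simp
  then have "w \<bullet> w = 0"
    using tendsto_inner[OF samples tendsto_const, of w] LIMSEQ_unique by fastforce
  then have samples_zero: "(\<lambda>n. v (real n)) \<longlonglongrightarrow> 0"
    using samples by simp
  have "filterlim (\<lambda>t. nat \<lfloor>t\<rfloor>) sequentially at_top"
    by (rule filterlim_compose[OF filterlim_nat_sequentially filterlim_floor_sequentially])
  from filterlim_compose[OF samples_zero this]
  have "((\<lambda>t. norm (v (real (nat \<lfloor>t\<rfloor>)))) \<longlongrightarrow> 0) at_top"
    by (simp add: tendsto_norm_zero_iff o_def)
  moreover have "\<forall>\<^sub>F t in at_top. norm (v t) \<le> norm (v (real (nat \<lfloor>t\<rfloor>)))"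
    using eventually_ge_at_top[of "0::real"]
    by eventually_elim (intro energy_antitone of_nat_floor of_nat_0_le_iff)
  ultimately show ?thesis
    by (rule Lim_null_comparison[rotated])
qed

end

lemma pointwise_limit_increments:
  fixes f :: "nat \<Rightarrow> 'a::real_normed_vector \<Rightarrow> 'b::real_normed_vector"
  assumes "convex S"
    and derf: "\<And>n x. x \<in> S \<Longrightarrow> (f n has_derivative f' n x) (at x within S)"
    and unif: "\<And>e. e > 0 \<Longrightarrow> \<forall>\<^sub>F n in sequentially. \<forall>x\<in>S. \<forall>h. norm (f' n x h - g' x h) \<le> e * norm h"
    and lim: "\<And>x. x \<in> S \<Longrightarrow> (\<lambda>n. f n x) \<longlonglongrightarrow> g x"
    and "x \<in> S" "e > 0"
  obtains N where "\<And>n y. n \<ge> N \<Longrightarrow> y \<in> S \<Longrightarrow> norm ((f n y - f n x) - (g y - g x)) \<le> e * norm (y - x)"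
proof -
  obtain N where N: "\<forall>m\<ge>N. \<forall>n\<ge>N. \<forall>y\<in>S. \<forall>z\<in>S.
      norm ((f m y - f n y) - (f m z - f n z)) \<le> e * norm (y - z)"
    using has_derivative_sequence_Lipschitz[OF \<open>convex S\<close> derf unif \<open>e > 0\<close>] by blast
  have "norm ((f n y - f n x) - (g y - g x)) \<le> e * norm (y - x)" if "n \<ge> N" "y \<in> S" for n y
  proof (rule LIMSEQ_le_const2)
    show "(\<lambda>m. norm ((f n y - f n x) - (f m y - f m x))) \<longlonglongrightarrow> norm ((f n y - f n x) - (g y - g x))"
      by (intro tendsto_intros lim \<open>y \<in> S\<close> \<open>x \<in> S\<close>)
    show "\<exists>M. \<forall>m\<ge>M. norm ((f n y - f n x) - (f m y - f m x)) \<le> e * norm (y - x)"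
    proof (intro exI allI impI)
      fix m assume "N \<le> m"
      have regroup: "(f n y - f n x) - (f m y - f m x) = (f n y - f m y) - (f n x - f m x)"
        by (simp add: algebra_simps)
      show "norm ((f n y - f n x) - (f m y - f m x)) \<le> e * norm (y - x)"
        unfolding regroup using N \<open>N \<le> m\<close> that \<open>x \<in> S\<close> by blast
    qed
  qed
  then show ?thesis
    by (rule that)
qed

(* The library's
   has_derivative_sequence needs a Banach codomain to produce the limit; here
   the limit is given, so a normed codomain suffices, which matters because the
   sort {real_inner, complete_space} is not known to be banach. *)
lemma has_derivative_pointwise_limit:
  fixes f :: "nat \<Rightarrow> 'a::real_normed_vector \<Rightarrow> 'b::real_normed_vector"
  assumes "convex S"
    and derf: "\<And>n x. x \<in> S \<Longrightarrow> (f n has_derivative f' n x) (at x within S)"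
    and unif: "\<And>e. e > 0 \<Longrightarrow> \<forall>\<^sub>F n in sequentially. \<forall>x\<in>S. \<forall>h. norm (f' n x h - g' x h) \<le> e * norm h"
    and lim: "\<And>x. x \<in> S \<Longrightarrow> (\<lambda>n. f n x) \<longlonglongrightarrow> g x"
    and linear: "bounded_linear (g' x)" and "x \<in> S"
  shows "(g has_derivative g' x) (at x within S)"
proof -
  have "\<forall>\<^sub>F y in at x within S. norm (g y - g x - g' x (y - x)) \<le> e * norm (y - x)" if "e > 0" for e
  proof -
    obtain N1 where N1: "\<And>n h. n \<ge> N1 \<Longrightarrow> norm (f' n x h - g' x h) \<le> e / 3 * norm h"
      using unif[of "e / 3"] \<open>e > 0\<close> \<open>x \<in> S\<close> by (auto simp: eventually_sequentially)
    obtain N2 where N2: "\<And>n y. n \<ge> N2 \<Longrightarrow> y \<in> S \<Longrightarrow>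
        norm ((f n y - f n x) - (g y - g x)) \<le> e / 3 * norm (y - x)"
      using pointwise_limit_increments[OF assms(1-4) \<open>x \<in> S\<close>, of "e / 3"] \<open>e > 0\<close> by auto
    define N where "N = max N1 N2"
    have "\<forall>\<^sub>F y in at x within S. norm (f N y - f N x - f' N x (y - x)) \<le> e / 3 * norm (y - x)"
      using derf[OF \<open>x \<in> S\<close>, of N, unfolded has_derivative_within_alt2] \<open>e > 0\<close>
      by (meson divide_pos_pos zero_less_numeral)
    moreover have "\<forall>\<^sub>F y in at x within S. y \<in> S"
      by (simp add: eventually_at_filter)
    ultimately show ?thesis
    proof eventually_elim
      case (elim y)
      have "g y - g x - g' x (y - x) = (f N y - f N x - f' N x (y - x))
          + (f' N x (y - x) - g' x (y - x)) - ((f N y - f N x) - (g y - g x))"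
        by (simp add: algebra_simps)
      also have "norm \<dots> \<le> norm (f N y - f N x - f' N x (y - x))
          + norm (f' N x (y - x) - g' x (y - x)) + norm ((f N y - f N x) - (g y - g x))"
        by (intro order.trans[OF norm_triangle_ineq4] add_mono norm_triangle_ineq order.refl)
      also have "\<dots> \<le> e / 3 * norm (y - x) + e / 3 * norm (y - x) + e / 3 * norm (y - x)"
        using elim N1[of N "y - x"] N2[of N y] by (intro add_mono) (auto simp: N_def)
      finally show ?case by simp
    qed
  qed
  then show ?thesis
    using linear by (simp add: has_derivative_within_alt2)
qed

lemma has_vector_derivative_pointwise_limit:
  fixes f :: "nat \<Rightarrow> real \<Rightarrow> 'a::real_normed_vector"
  assumes "convex S"
    and derf: "\<And>n x. x \<in> S \<Longrightarrow> (f n has_vector_derivative f' n x) (at x within S)"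
    and unif: "\<And>e. e > 0 \<Longrightarrow> \<forall>\<^sub>F n in sequentially. \<forall>x\<in>S. norm (f' n x - g' x) \<le> e"
    and lim: "\<And>x. x \<in> S \<Longrightarrow> (\<lambda>n. f n x) \<longlonglongrightarrow> g x"
    and "x \<in> S"
  shows "(g has_vector_derivative g' x) (at x within S)"
  unfolding has_vector_derivative_def
proof (rule has_derivative_pointwise_limit[OF \<open>convex S\<close>, where f' = "\<lambda>n x h. h *\<^sub>R f' n x"])
  fix e :: real assume "e > 0"
  show "\<forall>\<^sub>F n in sequentially. \<forall>x\<in>S. \<forall>h. norm (h *\<^sub>R f' n x - h *\<^sub>R g' x) \<le> e * norm h"
    using unif[OF \<open>e > 0\<close>]
  proof eventually_elim
    case (elim n)
    have "\<bar>h\<bar> * norm (f' n x - g' x) \<le> e * \<bar>h\<bar>" if "x \<in> S" for x h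
      using mult_left_mono[OF elim[rule_format, OF that] abs_ge_zero[of h]] by (simp add: mult.commute)
    then show ?case
      by (simp add: scaleR_diff_right[symmetric])
  qed
qed (use derf lim \<open>x \<in> S\<close> in \<open>auto simp: has_vector_derivative_def bounded_linear_scaleR_left\<close>)

lemma Cauchy_dominated:
  fixes X :: "nat \<Rightarrow> 'a::real_normed_vector" and Y :: "nat \<Rightarrow> 'b::real_normed_vector"
  assumes "Cauchy Y" and dominated: "\<And>m n. norm (X m - X n) \<le> c * norm (Y m - Y n)"
  shows "Cauchy X"
proof (rule CauchyI)
  fix e :: real assume "e > 0"
  then obtain M where M: "\<And>m n. m \<ge> M \<Longrightarrow> n \<ge> M \<Longrightarrow> norm (Y m - Y n) < e / (\<bar>c\<bar> + 1)"
    using CauchyD[OF \<open>Cauchy Y\<close>, of "e / (\<bar>c\<bar> + 1)"] by (auto simp: add_nonneg_pos)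
  have "norm (X m - X n) < e" if "m \<ge> M" "n \<ge> M" for m n
  proof -
    have "norm (X m - X n) \<le> (\<bar>c\<bar> + 1) * norm (Y m - Y n)"
      using dominated[of m n] by (smt (verit) mult_right_mono norm_ge_zero)
    also have "\<dots> < (\<bar>c\<bar> + 1) * (e / (\<bar>c\<bar> + 1))"
      using M[OF that] by (intro mult_strict_left_mono) auto
    also have "\<dots> = e"
      by (simp add: add_nonneg_pos)
    finally show ?thesis .
  qed
  then show "\<exists>M. \<forall>m\<ge>M. \<forall>n\<ge>M. norm (X m - X n) < e"
    by blast
qed

lemma perturbed_flows_converge:
  fixes T :: "'a::{real_inner, complete_space} \<Rightarrow> 'a" and w :: "nat \<Rightarrow> real \<Rightarrow> 'a"
  assumes linear: "bounded_linear T" and nonneg: "\<And>x. 0 \<le> T x \<bullet> x"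
    and flows: "\<And>n t. t \<ge> 0 \<Longrightarrow> (w n has_vector_derivative - T (w n t) + g n) (at t within {0..})"
    and start: "\<And>n. w n 0 = w0"
    and perturbations: "g \<longlonglongrightarrow> 0"
  obtains v where "v 0 = w0" "\<And>n t. t \<ge> 0 \<Longrightarrow> norm (w n t - v t) \<le> norm (g n) * t"
proof -
  interpret T: bounded_linear T by (rule linear)
  have distance: "norm (w m t - w n t) \<le> norm (g m - g n) * t" if "t \<ge> 0" for m n t
  proof (rule perturbed_flow_growth[OF nonneg _ _ that])
    fix s :: real assume "s \<ge> 0"
    from has_vector_derivative_diff[OF flows[OF this] flows[OF this]]
    show "((\<lambda>s. w m s - w n s) has_vector_derivative - T (w m s - w n s) + (g m - g n)) (at s within {0..})"
      by (simp add: T.diff algebra_simps)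
  qed (simp add: start)
  have cauchy: "Cauchy (\<lambda>n. w n t)" if "t \<ge> 0" for t
    by (rule Cauchy_dominated[OF LIMSEQ_imp_Cauchy[OF perturbations], where c = t])
      (use distance[OF that] in \<open>simp add: mult.commute\<close>)
  have limit: "(\<lambda>n. w n t) \<longlonglongrightarrow> lim (\<lambda>n. w n t)" if "t \<ge> 0" for t
    using Cauchy_convergent[OF cauchy[OF that]] by (simp add: convergent_LIMSEQ_iff)
  show ?thesis
  proof
    show "lim (\<lambda>n. w n 0) = w0"
      by (simp add: start)
    fix n and t :: real assume "t \<ge> 0"
    show "norm (w n t - lim (\<lambda>n. w n t)) \<le> norm (g n) * t"
    proof (rule LIMSEQ_le)
      show "(\<lambda>m. norm (w n t - w m t)) \<longlonglongrightarrow> norm (w n t - lim (\<lambda>n. w n t))"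
        by (intro tendsto_intros limit \<open>t \<ge> 0\<close>)
      show "(\<lambda>m. norm (g n - g m) * t) \<longlonglongrightarrow> norm (g n) * t"
        using tendsto_mult_right[OF tendsto_norm[OF tendsto_diff[OF tendsto_const perturbations]]]
        by simp
    qed (use distance[OF \<open>t \<ge> 0\<close>] in blast)
  qed
qed

(* A limit of flows whose forcings g_n vanish, approached at rate |g_n| t, solves the
   homogeneous flow: on each interval [0, t + 1] the velocities -T w_n + g_n converge
   uniformly to -T v. *)
lemma limit_of_flows_solves_homogeneous_flow:
  fixes T :: "'a::real_inner \<Rightarrow> 'a" and w :: "nat \<Rightarrow> real \<Rightarrow> 'a"
  assumes linear: "bounded_linear T"
    and flows: "\<And>n t. t \<ge> 0 \<Longrightarrow> (w n has_vector_derivative - T (w n t) + g n) (at t within {0..})"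
    and perturbations: "g \<longlonglongrightarrow> 0"
    and close: "\<And>n t. t \<ge> 0 \<Longrightarrow> norm (w n t - v t) \<le> norm (g n) * t"
    and "t \<ge> 0"
  shows "(v has_vector_derivative - T (v t)) (at t within {0..})"
proof -
  interpret T: bounded_linear T by (rule linear)
  obtain K where K: "K > 0" "\<And>x. norm (T x) \<le> norm x * K"
    using T.pos_bounded by blast
  define b where "b = t + 1"
  have velocity_gap: "norm ((- T (w n x) + g n) - (- T (v x))) \<le> norm (g n) * (K * b + 1)"
    if "x \<in> {0..b}" for n x
  proof -
    have "norm (v x - w n x) \<le> norm (g n) * x"
      using close[of x n] that by (simp add: norm_minus_commute)
    also have "\<dots> \<le> norm (g n) * b"
      using that by (simp add: mult_left_mono)
    finally have "norm (T (v x - w n x)) \<le> norm (g n) * b * K"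
      using K by (meson mult_right_mono less_imp_le order_trans)
    moreover have "(- T (w n x) + g n) - (- T (v x)) = T (v x - w n x) + g n"
      by (simp add: T.diff algebra_simps)
    ultimately show ?thesis
      using norm_triangle_ineq[of "T (v x - w n x)" "g n"] by (simp add: algebra_simps)
  qed
  have "(v has_vector_derivative - T (v t)) (at t within {0..b})"
  proof (rule has_vector_derivative_pointwise_limit[where f = w])
    fix n x assume "x \<in> {0..b}"
    then show "(w n has_vector_derivative - T (w n x) + g n) (at x within {0..b})"
      by (intro has_vector_derivative_within_subset[OF flows]) auto
  next
    fix e :: real assume "e > 0"
    have "(\<lambda>n. norm (g n) * (K * b + 1)) \<longlonglongrightarrow> 0"
      using tendsto_mult_right[OF tendsto_norm[OF perturbations]] by simp
    from order_tendstoD(2)[OF this \<open>e > 0\<close>]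
    show "\<forall>\<^sub>F n in sequentially. \<forall>x\<in>{0..b}. norm ((- T (w n x) + g n) - (- T (v x))) \<le> e"
      by eventually_elim (use velocity_gap in \<open>fastforce intro: order_trans\<close>)
  next
    fix x :: real assume "x \<in> {0..b}"
    then have "\<forall>\<^sub>F n in sequentially. norm (w n x - v x) \<le> norm (g n) * x"
      using close by simp
    moreover have "(\<lambda>n. norm (g n) * x) \<longlonglongrightarrow> 0"
      using tendsto_mult_right[OF tendsto_norm[OF perturbations], of x] by simp
    ultimately have "(\<lambda>n. w n x - v x) \<longlonglongrightarrow> 0"
      by (rule Lim_null_comparison)
    then show "(\<lambda>n. w n x) \<longlonglongrightarrow> v x"
      by (rule LIM_zero_cancel)
  qed (use \<open>t \<ge> 0\<close> in \<open>auto simp: b_def convex_real_interval\<close>)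
  moreover have "at t within {0..b} = at t within {0..}"
    by (rule at_within_nhd[of _ "{..<b}"]) (auto simp: b_def)
  ultimately show ?thesis
    by simp
qed

(* This replaces a general
   existence theory for ODEs in Banach spaces. *)
lemma homogeneous_flow_as_limit:
  fixes T :: "'a::{real_inner, complete_space} \<Rightarrow> 'a" and w :: "nat \<Rightarrow> real \<Rightarrow> 'a"
  assumes linear: "bounded_linear T" and nonneg: "\<And>x. 0 \<le> T x \<bullet> x"
    and flows: "\<And>n t. t \<ge> 0 \<Longrightarrow> (w n has_vector_derivative - T (w n t) + g n) (at t within {0..})"
    and start: "\<And>n. w n 0 = w0"
    and perturbations: "g \<longlonglongrightarrow> 0"
  obtains v where "v 0 = w0" "\<And>t. t \<ge> 0 \<Longrightarrow> (v has_vector_derivative - T (v t)) (at t within {0..})"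
proof -
  obtain v where v0: "v 0 = w0" and close: "\<And>n t. t \<ge> 0 \<Longrightarrow> norm (w n t - v t) \<le> norm (g n) * t"
    using perturbed_flows_converge[OF linear nonneg flows start perturbations] by blast
  show ?thesis
  proof (rule that[of v])
    show "v 0 = w0"
      by (rule v0)
    show "(v has_vector_derivative - T (v t)) (at t within {0..})" if "t \<ge> 0" for t
      using limit_of_flows_solves_homogeneous_flow[OF linear flows perturbations] close that by blast
  qed
qed

lemma homogeneous_flow_from_family:
  fixes T :: "'a::{real_inner, complete_space} \<Rightarrow> 'a" and e :: "real \<Rightarrow> real \<Rightarrow> 'a"
  assumes linear: "bounded_linear T"
    and nonneg: "\<And>x. 0 \<le> T x \<bullet> x"
    and flows: "\<And>\<delta> t. \<delta> > 0 \<Longrightarrow> t \<ge> 0 \<Longrightarrow>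
      (e \<delta> has_vector_derivative - T (e \<delta> t) + g \<delta>) (at t within {0..})"
    and start: "\<And>\<delta>. \<delta> > 0 \<Longrightarrow> e \<delta> 0 = e_start"
    and noise: "\<And>\<delta>. \<delta> > 0 \<Longrightarrow> norm (g \<delta>) \<le> K * \<delta>"
  obtains v where "v 0 = e_start"
    "\<And>t. t \<ge> 0 \<Longrightarrow> (v has_vector_derivative - T (v t)) (at t within {0..})"
proof -
  define \<delta>\<^sub>n where "\<delta>\<^sub>n n = inverse (real (Suc n))" for n
  have pos: "\<delta>\<^sub>n n > 0" for n
    by (simp add: \<delta>\<^sub>n_def)
  have vanishing: "(\<lambda>n. g (\<delta>\<^sub>n n)) \<longlonglongrightarrow> 0"
  proof (rule Lim_null_comparison)
    show "\<forall>\<^sub>F n in sequentially. norm (g (\<delta>\<^sub>n n)) \<le> K * \<delta>\<^sub>n n"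
      by (simp add: noise pos)
    show "(\<lambda>n. K * \<delta>\<^sub>n n) \<longlonglongrightarrow> 0"
      unfolding \<delta>\<^sub>n_def by (rule tendsto_mult_right_zero[OF LIMSEQ_inverse_real_of_nat])
  qed
  show ?thesis
  proof (rule homogeneous_flow_as_limit[where w = "\<lambda>n. e (\<delta>\<^sub>n n)" and g = "\<lambda>n. g (\<delta>\<^sub>n n)",
        OF linear nonneg])
    fix n :: nat and t :: real assume "t \<ge> 0"
    then show "(e (\<delta>\<^sub>n n) has_vector_derivative - T (e (\<delta>\<^sub>n n) t) + g (\<delta>\<^sub>n n)) (at t within {0..})"
      using flows pos by blast
  qed (use start pos vanishing that in blast)+
qed

(* Abstract form of the theorem: the errors e_delta solve the flow with forcing
   of size O(delta), start orthogonal to the kernel, and are stopped at tau(delta)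
   with tau -> oo and tau delta -> 0.  Comparing with the homogeneous flow v
   gives |e_delta(tau)| <= |v(tau)| + K delta tau -> 0. *)
lemma stopping_rule_convergence:
  fixes T :: "'a::{real_inner, complete_space} \<Rightarrow> 'a" and e :: "real \<Rightarrow> real \<Rightarrow> 'a"
    and \<tau> :: "real \<Rightarrow> real"
  assumes linear: "bounded_linear T"
    and selfadjoint: "\<And>x z. T x \<bullet> z = x \<bullet> T z"
    and nonneg: "\<And>x. 0 \<le> T x \<bullet> x"
    and flows: "\<And>\<delta> t. \<delta> > 0 \<Longrightarrow> t \<ge> 0 \<Longrightarrow>
      (e \<delta> has_vector_derivative - T (e \<delta> t) + g \<delta>) (at t within {0..})"
    and start: "\<And>\<delta>. \<delta> > 0 \<Longrightarrow> e \<delta> 0 = e_start"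
    and orthogonal: "\<And>k. T k = 0 \<Longrightarrow> e_start \<bullet> k = 0"
    and noise: "\<And>\<delta>. \<delta> > 0 \<Longrightarrow> norm (g \<delta>) \<le> K * \<delta>"
    and stop_pos: "\<And>\<delta>. \<delta> > 0 \<Longrightarrow> \<tau> \<delta> > 0"
    and stop_late: "filterlim \<tau> at_top (at_right 0)"
    and stop_early: "((\<lambda>\<delta>. \<tau> \<delta> * \<delta>) \<longlongrightarrow> 0) (at_right 0)"
  shows "((\<lambda>\<delta>. norm (e \<delta> (\<tau> \<delta>))) \<longlongrightarrow> 0) (at_right 0)"
proof -
  interpret T: bounded_linear T by (rule linear)
  obtain v where v0: "v 0 = e_start"
    and v_flow: "\<And>t. t \<ge> 0 \<Longrightarrow> (v has_vector_derivative - T (v t)) (at t within {0..})"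
    using homogeneous_flow_from_family[OF linear nonneg flows start noise] by blast
  interpret v: nonneg_selfadjoint_flow T v
    by unfold_locales (use selfadjoint nonneg v_flow in auto)
  have "(v \<longlongrightarrow> 0) at_top"
    by (rule v.tendsto_zero) (simp add: v0 orthogonal)
  then have "((\<lambda>\<delta>. norm (v (\<tau> \<delta>)) + K * (\<tau> \<delta> * \<delta>)) \<longlongrightarrow> 0) (at_right 0)"
    using filterlim_compose[OF tendsto_norm_zero stop_late] tendsto_mult_right_zero[OF stop_early]
    by (intro tendsto_add_zero) (auto simp: o_def)
  moreover have "\<forall>\<^sub>F \<delta> in at_right 0. norm (e \<delta> (\<tau> \<delta>)) \<le> norm (v (\<tau> \<delta>)) + K * (\<tau> \<delta> * \<delta>)"
    using eventually_at_right_less[of 0]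
  proof eventually_elim
    case (elim \<delta>)
    then have "\<delta> > 0" "\<tau> \<delta> \<ge> 0"
      using stop_pos[of \<delta>] by auto
    have "norm (e \<delta> (\<tau> \<delta>) - v (\<tau> \<delta>)) \<le> norm (g \<delta>) * \<tau> \<delta>"
    proof (rule perturbed_flow_growth[OF nonneg _ _ \<open>\<tau> \<delta> \<ge> 0\<close>])
      fix t :: real assume "t \<ge> 0"
      from has_vector_derivative_diff[OF flows[OF \<open>\<delta> > 0\<close> this] v_flow[OF this]]
      show "((\<lambda>t. e \<delta> t - v t) has_vector_derivative - T (e \<delta> t - v t) + g \<delta>) (at t within {0..})"
        by (simp add: T.diff algebra_simps)
    qed (simp add: start[OF \<open>\<delta> > 0\<close>] v0)
    also have "\<dots> \<le> K * (\<tau> \<delta> * \<delta>)"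
      using mult_right_mono[OF noise[OF \<open>\<delta> > 0\<close>] \<open>\<tau> \<delta> \<ge> 0\<close>] by (simp add: algebra_simps)
    finally show ?case
      using norm_triangle_sub[of "e \<delta> (\<tau> \<delta>)" "v (\<tau> \<delta>)"] by linarith
  qed
  ultimately have "((\<lambda>\<delta>. e \<delta> (\<tau> \<delta>)) \<longlongrightarrow> 0) (at_right 0)"
    by (rule Lim_null_comparison[rotated])
  then show ?thesis
    by (rule tendsto_norm_zero)
qed

lemma error_flow:
  assumes A: "bounded_linear A" and P: "bounded_linear P" and "A y = f"
    and "(u has_vector_derivative - P (A (u t) - f')) F"
  shows "((\<lambda>s. u s - y) has_vector_derivative - P (A (u t - y)) + P (f' - f)) F"
proof -
  interpret A: bounded_linear A by (rule A)
  interpret P: bounded_linear P by (rule P)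
  have "- P (A (u t - y)) + P (f' - f) = P (f' - A (u t))"
    using \<open>A y = f\<close> by (simp add: A.diff P.diff algebra_simps)
  also have "\<dots> = - P (A (u t) - f')"
    by (simp add: P.diff)
  finally show ?thesis
    using assms(4) by (simp add: has_vector_derivative_diff_const)
qed

theorem theorem2:
  fixes A P :: "'a::{real_inner, complete_space} \<Rightarrow> 'a"
    and f y u0 :: 'a
    and f_del :: "real \<Rightarrow> 'a"
    and u :: "real \<Rightarrow> real \<Rightarrow> 'a"
  assumes A_lin: "bounded_linear A"
    and solvable: "\<exists>v. A v = f"
    and y_sol: "A y = f"
    and y_orth: "orth_to y (null_space A)"
    and P_lin: "bounded_linear P"
    and T_sa: "\<forall>x z. P (A x) \<bullet> z = x \<bullet> P (A z)"
    and T_nonneg: "\<forall>x. P (A x) \<bullet> x \<ge> 0"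
    and T_null: "null_space (\<lambda>x. P (A x)) = null_space A"
    and u0_orth: "orth_to (u0 - y) (null_space A)"
    and f_del_close: "\<forall>\<delta>>0. norm (f_del \<delta> - f) \<le> \<delta>"
    and u_init: "\<forall>\<delta>>0. u \<delta> 0 = u0"
    and u_ode: "\<forall>\<delta>>0. \<forall>t\<ge>0. (u \<delta> has_vector_derivative
                   (- P (A (u \<delta> t) - f_del \<delta>))) (at t within {0..})"
  shows "(\<forall>t_del :: real \<Rightarrow> real.
            (\<forall>\<delta>>0. t_del \<delta> > 0) \<and>
            filterlim t_del at_top (at_right 0) \<and>
            ((\<lambda>\<delta>. t_del \<delta> * \<delta>) \<longlongrightarrow> 0) (at_right 0) \<longrightarrow>
            ((\<lambda>\<delta>. norm (u \<delta> (t_del \<delta>) - y)) \<longlongrightarrow> 0) (at_right 0))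
       \<and> (\<forall>C \<gamma> :: real. C > 0 \<and> 0 < \<gamma> \<and> \<gamma> < 1 \<longrightarrow>
            ((\<lambda>\<delta>. norm (u \<delta> (C * \<delta> powr (- \<gamma>)) - y)) \<longlongrightarrow> 0) (at_right 0))"
proof -
  obtain K where K: "K > 0" "\<And>x. norm (P x) \<le> norm x * K"
    using bounded_linear.pos_bounded[OF P_lin] by blast
  have convergence: "((\<lambda>\<delta>. norm (u \<delta> (\<tau> \<delta>) - y)) \<longlongrightarrow> 0) (at_right 0)"
    if "\<forall>\<delta>>0. \<tau> \<delta> > 0" "filterlim \<tau> at_top (at_right 0)"
      "((\<lambda>\<delta>. \<tau> \<delta> * \<delta>) \<longlongrightarrow> 0) (at_right 0)" for \<tau>
  proof (rule stopping_rule_convergence[where T = "\<lambda>x. P (A x)" and e = "\<lambda>\<delta> t. u \<delta> t - y"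
        and g = "\<lambda>\<delta>. P (f_del \<delta> - f)" and e_start = "u0 - y" and K = K])
    fix \<delta> t :: real assume "\<delta> > 0" "t \<ge> 0"
    then show "((\<lambda>t. u \<delta> t - y) has_vector_derivative - P (A (u \<delta> t - y)) + P (f_del \<delta> - f))
        (at t within {0..})"
      using error_flow[OF A_lin P_lin y_sol] u_ode by blast
  next
    fix \<delta> :: real assume "\<delta> > 0"
    have "norm (P (f_del \<delta> - f)) \<le> \<delta> * K"
      using K f_del_close \<open>\<delta> > 0\<close> by (meson less_imp_le mult_right_mono order_trans)
    then show "norm (P (f_del \<delta> - f)) \<le> K * \<delta>"
      by (simp add: mult.commute)
  next
    fix k assume "P (A k) = 0"
    then show "(u0 - y) \<bullet> k = 0"
      using T_null u0_orth by (auto simp: null_space_def orth_to_def)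
  qed (use bounded_linear_compose[OF P_lin A_lin] T_sa T_nonneg u_init that in auto)
  show ?thesis
  proof (intro conjI allI impI)
    fix C \<gamma> :: real assume "C > 0 \<and> 0 < \<gamma> \<and> \<gamma> < 1"
    then show "((\<lambda>\<delta>. norm (u \<delta> (C * \<delta> powr (- \<gamma>)) - y)) \<longlongrightarrow> 0) (at_right 0)"
      by (intro convergence) (auto, real_asymp+)
  qed (use convergence in blast)
qed

end
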